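(* Let $G$ be an unweighted undirected graph with maximum degree $\Delta$ and let $\mathcal{T}$ be a set of $k$ terminals. Then $\mathrm{DegCost}^*(\mathcal{T})=\Theta(\sqrt{\Delta}+k)\cdot q^*(\mathcal{T})$; that is, $\mathrm{DegCost}^*(\mathcal{T})\le O(\sqrt{\Delta}+k)\cdot q^*(\mathcal{T})$ for every such instance, and there exist instances with $\mathrm{DegCost}^*(\mathcal{T})=\Omega(\sqrt{\Delta}+k)\cdot q^*(\mathcal{T})$.
   Context: For $u\in V(G)$, $N[u]$ is $u$ together with its neighbors; for a subgraph $G'$, $N[G']=\bigcup_{u\in V(G')}N[u]$ and $\mathrm{Cost}(G')=|N[G']|$. $\mathrm{DegCost}(G')$ is the sum over nodes of $G'$ of their degrees in $G$. A Steiner tree for $\mathcal{T}$ is a tree $T\subseteq G$ with $\mathcal{T}\subseteq V(T)$. $q^*(\mathcal{T})=\min\{\mathrm{Cost}(T)\}$ and $\mathrm{DegCost}^*(\mathcal{T})=\min\{\mathrm{DegCost}(T)\}$, both minima over Steiner trees $T$ for $\mathcal{T}$. *)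

theory Defs
  imports Complex_Main
begin

definition graph :: "'a set \<Rightarrow> 'a set set \<Rightarrow> bool" where
  "graph V E \<longleftrightarrow> finite V \<and> (\<forall>e\<in>E. e \<subseteq> V \<and> card e = 2)"

definition nbrs :: "'a set set \<Rightarrow> 'a \<Rightarrow> 'a set" where
  "nbrs E u = {v. {u, v} \<in> E \<and> v \<noteq> u}"

definition cnbhd :: "'a set set \<Rightarrow> 'a \<Rightarrow> 'a set" where
  "cnbhd E u = insert u (nbrs E u)"

definition deg :: "'a set set \<Rightarrow> 'a \<Rightarrow> nat" where
  "deg E u = card (nbrs E u)"

definition maxdeg :: "'a set \<Rightarrow> 'a set set \<Rightarrow> nat" where
  "maxdeg V E = Max (deg E ` V)"

definition Cost :: "'a set set \<Rightarrow> 'a set \<Rightarrow> nat" where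
  "Cost E VT = card (\<Union>u\<in>VT. cnbhd E u)"

definition DegCost :: "'a set set \<Rightarrow> 'a set \<Rightarrow> nat" where
  "DegCost E VT = (\<Sum>u\<in>VT. deg E u)"

definition is_tree :: "'a set \<Rightarrow> 'a set set \<Rightarrow> bool" where
  "is_tree VT ET \<longleftrightarrow> VT \<noteq> {} \<and> finite VT \<and> (\<forall>e\<in>ET. e \<subseteq> VT \<and> card e = 2)
     \<and> (\<forall>u\<in>VT. \<forall>v\<in>VT. (u, v) \<in> {(x, y). {x, y} \<in> ET}\<^sup>*)
     \<and> card ET = card VT - 1"

definition steiner_tree :: "'a set \<Rightarrow> 'a set set \<Rightarrow> 'a set \<Rightarrow> 'a set \<Rightarrow> 'a set set \<Rightarrow> bool" where
  "steiner_tree V E T VT ET \<longleftrightarrow> VT \<subseteq> V \<and> ET \<subseteq> E \<and> is_tree VT ET \<and> T \<subseteq> VT"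

definition qstar :: "'a set \<Rightarrow> 'a set set \<Rightarrow> 'a set \<Rightarrow> nat" where
  "qstar V E T = Min {Cost E VT | VT ET. steiner_tree V E T VT ET}"

definition DegCoststar :: "'a set \<Rightarrow> 'a set set \<Rightarrow> 'a set \<Rightarrow> nat" where
  "DegCoststar V E T = Min {DegCost E VT | VT ET. steiner_tree V E T VT ET}"

definition st_instance :: "'a set \<Rightarrow> 'a set set \<Rightarrow> 'a set \<Rightarrow> bool" where
  "st_instance V E T \<longleftrightarrow> graph V E \<and> T \<subseteq> V \<and> T \<noteq> {} \<and> (\<exists>VT ET. steiner_tree V E T VT ET)"

end

theory Submission
  imports Defs
begin

text \<open>Upper bound: let \<open>S\<close> be a Steiner tree of minimum cost, \<open>N = N[S]\<close> (so \<open>|N| = q\<^sup>*\<close>) and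
  \<open>r \<approx> \<surd>\<Delta>\<close>.  Among the connected sets \<open>X\<close> with \<open>T \<subseteq> X \<subseteq> N\<close> take one minimising
  \<open>|X \<inter> S| + r |X - S|\<close>; comparing with \<open>S\<close> gives \<open>r |X - S| \<le> q\<^sup>*\<close>, so the vertices outside \<open>S\<close>
  contribute at most \<open>|X - S| \<Delta> \<le> \<surd>\<Delta> q\<^sup>*\<close> to the degree sum.  The vertices in \<open>X \<inter> S\<close> have all
  their neighbours in \<open>N\<close>, and each \<open>w \<in> N\<close> has at most \<open>r + 2k\<close> neighbours in \<open>X\<close>: otherwise
  adding \<open>w\<close> and pruning to a smallest connected set containing \<open>T\<close> and \<open>w\<close> would lower the weight,
  because the non-terminal neighbours of \<open>w\<close> that survive pruning separate pairwise different
  terminals from \<open>w\<close>.  Double counting then bounds the degree sum by \<open>(r + 2k) q\<^sup>* + \<surd>\<Delta> q\<^sup>*\<close>.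

  Lower bounds: the complete graph \<open>K\<^sub>n\<close> with every vertex a terminal, and a path on \<open>m\<close> vertices
  whose two ends are the terminals, with \<open>m\<close> hubs adjacent to the whole path and to \<open>m\<^sup>2\<close> common
  leaves: a Steiner tree either uses a hub, of degree at least \<open>m\<^sup>2\<close>, or the entire path.\<close>

section \<open>Connectivity inside a vertex set\<close>

definition adj_on :: "'a set set \<Rightarrow> 'a set \<Rightarrow> ('a \<times> 'a) set" where
  "adj_on E A = {(x, y). {x, y} \<in> E \<and> x \<in> A \<and> y \<in> A}"

definition connected_on :: "'a set set \<Rightarrow> 'a set \<Rightarrow> bool" where
  "connected_on E A \<longleftrightarrow> (\<forall>u\<in>A. \<forall>v\<in>A. (u, v) \<in> (adj_on E A)\<^sup>*)"

definition reachable_on :: "'a set set \<Rightarrow> 'a set \<Rightarrow> 'a \<Rightarrow> 'a set" where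
  "reachable_on E A w = {v. (w, v) \<in> (adj_on E A)\<^sup>*}"

lemma sym_adj_on: "sym (adj_on E A)"
  by (auto simp: adj_on_def sym_def insert_commute)

lemma adj_on_rtrancl_sym: "(x, y) \<in> (adj_on E A)\<^sup>* \<Longrightarrow> (y, x) \<in> (adj_on E A)\<^sup>*"
  by (meson sym_adj_on sym_rtrancl symD)

lemma adj_on_rtrancl_mono:
  "A \<subseteq> B \<Longrightarrow> (x, y) \<in> (adj_on E A)\<^sup>* \<Longrightarrow> (x, y) \<in> (adj_on E B)\<^sup>*"
  by (rule rtrancl_mono[THEN subsetD]) (auto simp: adj_on_def)

lemma adj_on_rtrancl_in: "(x, y) \<in> (adj_on E A)\<^sup>* \<Longrightarrow> y = x \<or> y \<in> A"
  by (induction rule: rtrancl_induct) (auto simp: adj_on_def)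

lemma sym_rtrancl_pairs_through:
  assumes "sym r" and "\<And>u. u \<in> A \<Longrightarrow> (u, c) \<in> r\<^sup>*"
  shows "\<forall>u\<in>A. \<forall>v\<in>A. (u, v) \<in> r\<^sup>*"
  by (meson assms rtrancl_trans sym_rtrancl symD)

lemma connected_onI:
  assumes "\<And>u. u \<in> A \<Longrightarrow> (u, c) \<in> (adj_on E A)\<^sup>*"
  shows "connected_on E A"
  unfolding connected_on_def by (rule sym_rtrancl_pairs_through[OF sym_adj_on assms])

lemma reachable_on_subset: "w \<in> A \<Longrightarrow> reachable_on E A w \<subseteq> A"
  using adj_on_rtrancl_in by (fastforce simp: reachable_on_def)

lemma reachable_on_self: "w \<in> reachable_on E A w"
  by (simp add: reachable_on_def)

lemma rtrancl_adj_on_reachable_on: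
  "(w, u) \<in> (adj_on E A)\<^sup>* \<Longrightarrow> (w, u) \<in> (adj_on E (reachable_on E A w))\<^sup>*"
proof (induction rule: rtrancl_induct)
  case (step y z)
  then have "(y, z) \<in> adj_on E (reachable_on E A w)"
    by (auto simp: adj_on_def reachable_on_def intro: rtrancl_into_rtrancl)
  with step.IH show ?case by (rule rtrancl_into_rtrancl)
qed simp

lemma connected_on_reachable_on: "connected_on E (reachable_on E A w)"
proof (rule connected_onI[where c = w])
  fix u assume "u \<in> reachable_on E A w"
  then have "(w, u) \<in> (adj_on E A)\<^sup>*" by (simp add: reachable_on_def)
  then have "(w, u) \<in> (adj_on E (reachable_on E A w))\<^sup>*" by (rule rtrancl_adj_on_reachable_on)
  then show "(u, w) \<in> (adj_on E (reachable_on E A w))\<^sup>*" by (rule adj_on_rtrancl_sym)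
qed

lemma connected_on_insert:
  assumes "connected_on E X" "y \<in> X" "{w, y} \<in> E"
  shows "connected_on E (insert w X)"
proof (rule connected_onI[where c = y])
  fix u assume "u \<in> insert w X"
  then show "(u, y) \<in> (adj_on E (insert w X))\<^sup>*"
  proof
    assume "u = w"
    with assms(2,3) show ?thesis by (auto simp: adj_on_def)
  next
    assume "u \<in> X"
    with assms(1,2) show ?thesis
      by (auto simp: connected_on_def intro: adj_on_rtrancl_mono[of X])
  qed
qed

lemma steiner_tree_connected_on:
  assumes "steiner_tree V E T VT ET"
  shows "connected_on E VT"
proof -
  have "{(x, y). {x, y} \<in> ET} \<subseteq> adj_on E VT"
    using assms by (auto simp: steiner_tree_def is_tree_def adj_on_def)
  with assms show ?thesis
    unfolding connected_on_def steiner_tree_def is_tree_def by (meson rtrancl_mono subsetD)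
qed

section \<open>Spanning trees and optimal Steiner trees\<close>

lemma is_tree_insert:
  assumes t: "is_tree B ET" and u: "u \<in> B" and v: "v \<notin> B"
  shows "is_tree (insert v B) (insert {u, v} ET)"
proof -
  let ?R = "{(x, y). {x, y} \<in> insert {u, v} ET}"
  have finB: "finite B" and edges: "\<forall>e\<in>ET. e \<subseteq> B \<and> card e = 2"
    and cardET: "card ET = card B - 1" using t by (auto simp: is_tree_def)
  have "finite ET"
    using edges finB by (meson Pow_iff finite_Pow_iff finite_subset subsetI)
  moreover have "{u, v} \<notin> ET" using edges v by auto
  moreover have "card B \<ge> 1" using finB u by (metis One_nat_def Suc_leI card_gt_0_iff empty_iff)
  ultimately have card: "card (insert {u, v} ET) = card (insert v B) - 1"
    using cardET finB v by simp
  have "(x, u) \<in> ?R\<^sup>*" if "x \<in> insert v B" for x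
  proof (cases "x = v")
    case True
    then show ?thesis by (auto simp: insert_commute)
  next
    case False
    with that have "(x, u) \<in> {(x, y). {x, y} \<in> ET}\<^sup>*" using t u by (auto simp: is_tree_def)
    then show ?thesis by (rule rtrancl_mono[THEN subsetD, rotated]) auto
  qed
  moreover have "sym ?R" by (auto simp: sym_def insert_commute)
  ultimately show ?thesis
    using sym_rtrancl_pairs_through[of ?R "insert v B" u] edges u v card finB
    unfolding is_tree_def by (auto simp: card_insert_if)
qed

lemma spanning_tree_extend:
  assumes "finite A" "connected_on E A"
  shows "B \<subseteq> A \<Longrightarrow> ET \<subseteq> E \<Longrightarrow> is_tree B ET \<Longrightarrow> \<exists>ET'. ET' \<subseteq> E \<and> is_tree A ET'"
proof (induction "card (A - B)" arbitrary: B ET rule: less_induct)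
  case less
  show ?case
  proof (cases "B = A")
    case True with less.prems show ?thesis by blast
  next
    case False
    then obtain a where a: "a \<in> A" "a \<notin> B" using less.prems(1) by blast
    obtain b where b: "b \<in> B" using less.prems(3) by (auto simp: is_tree_def)
    have ba: "(b, a) \<in> (adj_on E A)\<^sup>*"
      using assms(2) a b less.prems(1) by (auto simp: connected_on_def)
    have "\<exists>u v. (u, v) \<in> adj_on E A \<and> u \<in> B \<and> v \<notin> B"
    proof (rule ccontr)
      assume no_exit: "\<not> ?thesis"
      have "a \<in> B" using ba by (induction rule: rtrancl_induct) (use b no_exit in auto)
      with a show False by simp
    qed
    then obtain u v where uv: "(u, v) \<in> adj_on E A" "u \<in> B" "v \<notin> B" by blast
    then have vA: "v \<in> A" and uvE: "{u, v} \<in> E" by (auto simp: adj_on_def)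
    have "card (A - insert v B) < card (A - B)"
      using assms(1) vA uv(3) by (metis Diff_insert card_Diff1_less finite_Diff Diff_iff)
    moreover have "insert {u, v} ET \<subseteq> E" using less.prems(2) uvE by simp
    ultimately show ?thesis
      using less.hyps[of "insert v B"] less.prems(1) vA is_tree_insert[OF less.prems(3) uv(2,3)]
      by blast
  qed
qed

lemma steiner_tree_of_connected_on:
  assumes "graph V E" "A \<subseteq> V" "connected_on E A" "T \<subseteq> A" "T \<noteq> {}"
  shows "\<exists>ET. steiner_tree V E T A ET"
proof -
  obtain b where "b \<in> A" using assms(4,5) by blast
  moreover have "finite A" using assms(1,2) by (meson finite_subset graph_def)
  ultimately obtain ET where "ET \<subseteq> E" "is_tree A ET"
    using spanning_tree_extend[OF _ assms(3), of "{b}" "{}"] by (auto simp: is_tree_def)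
  with assms show ?thesis unfolding steiner_tree_def by blast
qed

lemma finite_steiner_values:
  assumes "graph V E"
  shows "finite {f VT | VT ET. steiner_tree V E T VT ET}"
proof -
  have "{f VT | VT ET. steiner_tree V E T VT ET} \<subseteq> f ` Pow V"
    by (auto simp: steiner_tree_def)
  then show ?thesis using assms by (meson finite_Pow_iff finite_imageI finite_subset graph_def)
qed

lemma qstar_le_Cost:
  assumes "graph V E" "steiner_tree V E T VT ET"
  shows "qstar V E T \<le> Cost E VT"
  unfolding qstar_def using finite_steiner_values[OF assms(1), of "Cost E" T] assms(2)
  by (intro Min_le) auto

lemma qstar_attained:
  assumes "graph V E" "steiner_tree V E T VT0 ET0"
  obtains VT ET where "steiner_tree V E T VT ET" "Cost E VT = qstar V E T"
proof -
  have "qstar V E T \<in> {Cost E VT | VT ET. steiner_tree V E T VT ET}"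
    unfolding qstar_def using finite_steiner_values[OF assms(1), of "Cost E" T] assms(2)
    by (intro Min_in) auto
  with that show ?thesis by force
qed

lemma DegCoststar_le_DegCost:
  assumes "graph V E" "steiner_tree V E T VT ET"
  shows "DegCoststar V E T \<le> DegCost E VT"
  unfolding DegCoststar_def using finite_steiner_values[OF assms(1), of "DegCost E" T] assms(2)
  by (intro Min_le) auto

lemma DegCoststar_greatest:
  assumes "graph V E" "steiner_tree V E T VT0 ET0"
    and "\<And>VT ET. steiner_tree V E T VT ET \<Longrightarrow> b \<le> DegCost E VT"
  shows "b \<le> DegCoststar V E T"
  unfolding DegCoststar_def using finite_steiner_values[OF assms(1), of "DegCost E" T] assms(2,3)
  by (subst Min_ge_iff) auto

lemma deg_le_maxdeg: "finite V \<Longrightarrow> x \<in> V \<Longrightarrow> deg E x \<le> maxdeg V E"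
  unfolding maxdeg_def by (intro Max_ge) auto

section \<open>The upper bound\<close>

lemma adj_on_rtrancl_avoid_one_of_two_nbrs:
  assumes "(t, u) \<in> (adj_on E Z)\<^sup>*" "t \<in> Z - {y1, y2}" "{y1, w} \<in> E" "{y2, w} \<in> E"
    "w \<in> Z - {y1, y2}" "y1 \<in> Z" "y2 \<in> Z" "y1 \<noteq> y2"
  shows "(t, u) \<in> (adj_on E (Z - {y1, y2}))\<^sup>* \<or> (t, w) \<in> (adj_on E (Z - {y1}))\<^sup>*
       \<or> (t, w) \<in> (adj_on E (Z - {y2}))\<^sup>*"
  using assms(1)
proof (induction rule: rtrancl_induct)
  case (step u v)
  let ?Z0 = "Z - {y1, y2}"
  from step.IH show ?case
  proof (elim disjE)
    assume h: "(t, u) \<in> (adj_on E ?Z0)\<^sup>*"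
    have u0: "u \<in> ?Z0" using adj_on_rtrancl_in[OF h] assms(2) by auto
    have uvE: "{u, v} \<in> E" and vZ: "v \<in> Z" using step.hyps(2) by (auto simp: adj_on_def)
    consider "v = y1" | "v = y2" | "v \<in> ?Z0" using vZ by blast
    then show ?thesis
    proof cases
      case 1
      have tu: "(t, u) \<in> (adj_on E (Z - {y2}))\<^sup>*" by (rule adj_on_rtrancl_mono[OF _ h]) auto
      have uy: "(u, y1) \<in> adj_on E (Z - {y2})"
        using u0 uvE \<open>v = y1\<close> assms(6,8) by (simp add: adj_on_def)
      have yw: "(y1, w) \<in> adj_on E (Z - {y2})"
        using assms(3,5,6,8) by (simp add: adj_on_def)
      show ?thesis using rtrancl_into_rtrancl[OF rtrancl_into_rtrancl[OF tu uy] yw] by blast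
    next
      case 2
      have tu: "(t, u) \<in> (adj_on E (Z - {y1}))\<^sup>*" by (rule adj_on_rtrancl_mono[OF _ h]) auto
      have uy: "(u, y2) \<in> adj_on E (Z - {y1})"
        using u0 uvE \<open>v = y2\<close> assms(7,8) by (simp add: adj_on_def)
      have yw: "(y2, w) \<in> adj_on E (Z - {y1})"
        using assms(4,5,7,8) by (simp add: adj_on_def)
      show ?thesis using rtrancl_into_rtrancl[OF rtrancl_into_rtrancl[OF tu uy] yw] by blast
    next
      case 3
      then have "(u, v) \<in> adj_on E ?Z0" using u0 uvE by (auto simp: adj_on_def)
      with h have "(t, v) \<in> (adj_on E ?Z0)\<^sup>*" by (rule rtrancl_into_rtrancl)
      then show ?thesis by blast
    qed
  qed auto
qed simp

text \<open>In a smallest connected set containing \<open>T\<close> and \<open>w\<close>, removing a non-terminal neighbour \<open>y\<close>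
  of \<open>w\<close> must cut some terminal off from \<open>w\<close>; two distinct such neighbours cannot cut off the same
  terminal, since every path to \<open>w\<close> may be rerouted through the other one.\<close>
lemma min_connected_on_nbrs_le:
  assumes finZ: "finite Z" and cZ: "connected_on E Z" and TZ: "T \<subseteq> Z" and wZ: "w \<in> Z"
    and Zmin: "\<And>Z'. Z' \<subseteq> Z \<Longrightarrow> T \<subseteq> Z' \<Longrightarrow> w \<in> Z' \<Longrightarrow> connected_on E Z' \<Longrightarrow> card Z \<le> card Z'"
  shows "card (nbrs E w \<inter> Z - T) \<le> card T"
proof -
  let ?W = "nbrs E w \<inter> Z - T"
  have cut: "\<exists>t\<in>T. t \<notin> reachable_on E (Z - {y}) w" if y: "y \<in> ?W" for y
  proof (rule ccontr)
    assume "\<not> ?thesis"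
    then have TR: "T \<subseteq> reachable_on E (Z - {y}) w" by blast
    have "w \<noteq> y" using y by (auto simp: nbrs_def)
    then have R: "reachable_on E (Z - {y}) w \<subseteq> Z - {y}" using wZ by (intro reachable_on_subset) simp
    then have "card Z \<le> card (reachable_on E (Z - {y}) w)"
      using Zmin[OF _ TR reachable_on_self connected_on_reachable_on] by blast
    moreover have "card (reachable_on E (Z - {y}) w) \<le> card (Z - {y})"
      using R finZ by (intro card_mono) auto
    moreover have "card (Z - {y}) < card Z" using finZ y by (intro card_Diff1_less) auto
    ultimately show False by simp
  qed
  have "\<forall>y\<in>?W. \<exists>t. t \<in> T \<and> t \<notin> reachable_on E (Z - {y}) w" using cut by blast
  then obtain f where f: "\<forall>y\<in>?W. f y \<in> T \<and> f y \<notin> reachable_on E (Z - {y}) w"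
    by (rule bchoice[THEN exE])
  have "inj_on f ?W"
  proof (rule inj_onI, rule ccontr)
    fix y1 y2 assume y1: "y1 \<in> ?W" and y2: "y2 \<in> ?W" and eq: "f y1 = f y2" and ne: "y1 \<noteq> y2"
    define t where "t = f y1"
    have "t \<notin> reachable_on E (Z - {y1}) w" "t \<notin> reachable_on E (Z - {y2}) w"
      using bspec[OF f y1] bspec[OF f y2] eq by (auto simp: t_def)
    then have cut1: "(t, w) \<notin> (adj_on E (Z - {y1}))\<^sup>*" and cut2: "(t, w) \<notin> (adj_on E (Z - {y2}))\<^sup>*"
      by (auto simp: reachable_on_def dest: adj_on_rtrancl_sym)
    have "(t, w) \<notin> (adj_on E (Z - {y1, y2}))\<^sup>*"
      using cut1 adj_on_rtrancl_mono[of "Z - {y1, y2}" "Z - {y1}"] by blast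
    moreover have tZ: "t \<in> Z - {y1, y2}" using bspec[OF f y1] TZ y1 y2 by (auto simp: t_def)
    moreover have "(t, w) \<in> (adj_on E Z)\<^sup>*" using cZ tZ wZ by (auto simp: connected_on_def)
    moreover have "{y1, w} \<in> E" "{y2, w} \<in> E" "w \<in> Z - {y1, y2}"
      using y1 y2 wZ by (auto simp: nbrs_def insert_commute)
    ultimately show False
      using adj_on_rtrancl_avoid_one_of_two_nbrs[of t w E Z y1 y2] cut1 cut2 y1 y2 ne by blast
  qed
  moreover have "f ` ?W \<subseteq> T" using f by blast
  moreover have "finite T" using finZ TZ finite_subset by blast
  ultimately show ?thesis by (rule card_inj_on_le)
qed

definition weight :: "'a set \<Rightarrow> nat \<Rightarrow> 'a set \<Rightarrow> nat" where
  "weight S r A = card (A \<inter> S) + r * card (A - S)"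

lemma weight_Diff:
  assumes "finite B" "A \<subseteq> B"
  shows "weight S r B = weight S r A + weight S r (B - A)"
proof -
  have "card (B \<inter> S) = card ((A \<inter> S) \<union> ((B - A) \<inter> S))"
    using assms(2) by (intro arg_cong[where f = card]) blast
  also have "\<dots> = card (A \<inter> S) + card ((B - A) \<inter> S)"
    using assms finite_subset by (intro card_Un_disjoint) auto
  finally have "card (B \<inter> S) = card (A \<inter> S) + card ((B - A) \<inter> S)" .
  moreover have "card (B - S) = card ((A - S) \<union> ((B - A) - S))"
    using assms(2) by (intro arg_cong[where f = card]) blast
  moreover have "\<dots> = card (A - S) + card ((B - A) - S)"
    using assms finite_subset by (intro card_Un_disjoint) auto
  ultimately show ?thesis unfolding weight_def by (simp add: algebra_simps)
qed

lemma card_le_weight: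
  assumes "finite A" "r \<ge> 1"
  shows "card A \<le> weight S r A"
proof -
  have "card (A - S) \<le> r * card (A - S)" using assms(2) by simp
  then show ?thesis unfolding weight_def using card_Int_Diff[OF assms(1), of S] by linarith
qed

lemma weight_le:
  assumes "finite A" "r \<ge> 1"
  shows "weight S r A \<le> r * card A"
proof -
  have "card (A \<inter> S) \<le> r * card (A \<inter> S)" using assms(2) by simp
  then show ?thesis
    unfolding weight_def using card_Int_Diff[OF assms(1), of S] by (simp add: algebra_simps)
qed

lemma weight_subset:
  assumes "A \<subseteq> S"
  shows "weight S r A = card A"
  using assms by (simp add: weight_def Int_absorb2 Diff_eq_empty_iff[THEN iffD2, OF assms])

lemma weight_insert_le:
  assumes "finite A" "r \<ge> 1"
  shows "weight S r (insert w A) \<le> weight S r A + r"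
proof -
  have "weight S r (insert w A) = weight S r A + weight S r (insert w A - A)"
    using assms(1) by (intro weight_Diff) auto
  also have "weight S r (insert w A - A) \<le> r * card (insert w A - A)"
    using assms by (intro weight_le) auto
  also have "card (insert w A - A) \<le> 1"
    using card_mono[of "{w}" "insert w A - A"] by auto
  finally show ?thesis using assms(2) by simp
qed

text \<open>Enlarge \<open>X\<close> by \<open>w\<close> and shrink it again to a smallest connected \<open>Z\<close> containing \<open>T\<close> and \<open>w\<close>:
  the neighbours of \<open>w\<close> kept in \<open>Z\<close> are terminals or counted by \<open>min_connected_on_nbrs_le\<close>, and
  by minimality of \<open>X\<close> the weight, hence the number, of the dropped vertices is at most \<open>r\<close>.\<close>
lemma weight_minimiser_nbrs_le:
  assumes finN: "finite N" and r: "r \<ge> 1" and XN: "X \<subseteq> N" and TX: "T \<subseteq> X"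
    and cX: "connected_on E X"
    and Xmin: "\<And>Z. Z \<subseteq> N \<Longrightarrow> T \<subseteq> Z \<Longrightarrow> connected_on E Z \<Longrightarrow> weight S r X \<le> weight S r Z"
    and wN: "w \<in> N"
  shows "card (nbrs E w \<inter> X) \<le> r + 2 * card T"
proof (cases "nbrs E w \<inter> X = {}")
  case False
  let ?Y = "nbrs E w \<inter> X" and ?Z = "insert w X"
  have finX: "finite X" and finZ: "finite ?Z" using finN XN finite_subset by auto
  let ?P = "\<lambda>Z. Z \<subseteq> ?Z \<and> T \<subseteq> Z \<and> w \<in> Z \<and> connected_on E Z"
  have "connected_on E ?Z"
    using False cX connected_on_insert by (fastforce simp: nbrs_def)
  then have "?P ?Z" using TX by blast
  then obtain Z where Z: "?P Z" and Zmin: "\<forall>Z'. ?P Z' \<longrightarrow> card Z \<le> card Z'"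
    using ex_has_least_nat[of ?P ?Z card] by blast
  have finZ': "finite Z" using Z finZ by (meson finite_subset)
  have "card (nbrs E w \<inter> Z - T) \<le> card T"
    by (rule min_connected_on_nbrs_le) (use Z Zmin finZ' in auto)
  moreover have "card (?Y \<inter> Z - T) \<le> card (nbrs E w \<inter> Z - T)"
    using finZ' by (intro card_mono) auto
  ultimately have kept: "card (?Y \<inter> Z - T) \<le> card T" by linarith
  have terminals: "card (?Y \<inter> T) \<le> card T"
    using finX TX by (intro card_mono) (auto intro: finite_subset)
  have "Z \<subseteq> N" using Z XN wN by blast
  then have "weight S r X \<le> weight S r Z" using Xmin Z by blast
  moreover have "card (?Z - Z) \<le> weight S r (?Z - Z)" using finZ r by (simp add: card_le_weight)
  moreover have "weight S r ?Z = weight S r Z + weight S r (?Z - Z)"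
    using weight_Diff[OF finZ] Z by blast
  moreover have "weight S r ?Z \<le> weight S r X + r" using weight_insert_le[OF finX r] .
  ultimately have "card (?Z - Z) \<le> r" by linarith
  moreover have "card (?Y - Z) \<le> card (?Z - Z)" using finZ by (intro card_mono) auto
  moreover have "card ?Y \<le> card ((?Y \<inter> Z - T) \<union> (?Y \<inter> T) \<union> (?Y - Z))"
    using finX by (intro card_mono) auto
  moreover have "card ((?Y \<inter> Z - T) \<union> (?Y \<inter> T) \<union> (?Y - Z))
      \<le> card (?Y \<inter> Z - T) + card (?Y \<inter> T) + card (?Y - Z)"
    by (meson add_le_mono1 card_Un_le le_trans)
  ultimately show ?thesis using kept terminals by linarith
qed simp

lemma sum_card_nbrs_swap:
  assumes "finite A" "finite N" "\<And>x. x \<in> A \<Longrightarrow> nbrs E x \<subseteq> N"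
  shows "(\<Sum>x\<in>A. card (nbrs E x)) = (\<Sum>w\<in>N. card (nbrs E w \<inter> A))"
proof -
  have "(\<Sum>x\<in>A. card (nbrs E x)) = (\<Sum>x\<in>A. card {w. w \<in> N \<and> w \<in> nbrs E x})"
    using assms(3) by (intro sum.cong) (auto intro: arg_cong[where f = card])
  also have "\<dots> = (\<Sum>w\<in>N. card {x. x \<in> A \<and> w \<in> nbrs E x})"
    using sum.swap_restrict[OF assms(1,2), of "\<lambda>_ _. 1::nat" "\<lambda>x w. w \<in> nbrs E x"] by simp
  also have "\<dots> = (\<Sum>w\<in>N. card (nbrs E w \<inter> A))"
    by (intro sum.cong refl arg_cong[where f = card]) (auto simp: nbrs_def insert_commute)
  finally show ?thesis .
qed

lemma degree_sum_bound_arith: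
  fixes a q r k c \<Delta> :: nat
  assumes a: "a \<le> q * (r + 2 * k) + c * \<Delta>" and rc: "r * c \<le> q"
    and r: "sqrt \<Delta> \<le> r" "r \<le> sqrt \<Delta> + 1" and k: "k \<ge> 1"
  shows "real a \<le> 4 * (sqrt \<Delta> + k) * q"
proof -
  define s where "s = sqrt \<Delta>"
  have s: "s \<ge> 0" "real \<Delta> = s * s" by (simp_all add: s_def)
  have "real c * \<Delta> = real c * s * s" by (simp add: s(2))
  also have "\<dots> \<le> real c * r * s"
    using r(1) s(1) by (intro mult_right_mono mult_left_mono) (auto simp: s_def)
  also have "\<dots> \<le> q * s"
    using rc s(1) by (intro mult_right_mono) (auto simp: mult.commute simp flip: of_nat_mult)
  finally have c: "real c * \<Delta> \<le> q * s" .
  have "real a \<le> real (q * (r + 2 * k) + c * \<Delta>)" using a by (simp only: of_nat_le_iff)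
  also have "\<dots> = real q * (real r + 2 * real k) + real c * \<Delta>" by simp
  also have "\<dots> \<le> real q * (real r + 2 * real k + s)" using c by (simp add: algebra_simps)
  also have "\<dots> \<le> real q * (4 * (s + real k))"
    using r(2) k s(1) unfolding s_def[symmetric] by (intro mult_left_mono) auto
  finally show ?thesis by (simp add: s_def algebra_simps)
qed

lemma sum_deg_le_maxdeg:
  assumes "finite V" "A \<subseteq> V"
  shows "(\<Sum>x\<in>A. deg E x) \<le> card A * maxdeg V E"
proof -
  have "(\<Sum>x\<in>A. deg E x) \<le> (\<Sum>x\<in>A. maxdeg V E)"
    using assms by (intro sum_mono deg_le_maxdeg) auto
  then show ?thesis by simp
qed

text \<open>\<open>X\<close> is a weight-minimising connected set between \<open>T\<close> and \<open>N\<close>: the degrees of \<open>X \<inter> S\<close> are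
  double counted over \<open>N\<close>, and \<open>S\<close> itself competes in the minimisation, which bounds \<open>r |X - S|\<close>.\<close>
lemma connected_on_small_DegCost:
  assumes g: "graph V E" and st: "steiner_tree V E T S ES" and r: "r \<ge> 1"
  defines "N \<equiv> \<Union>u\<in>S. cnbhd E u"
  obtains X where "X \<subseteq> V" "T \<subseteq> X" "connected_on E X"
    "DegCost E X \<le> card N * (r + 2 * card T) + card (X - S) * maxdeg V E"
    "r * card (X - S) \<le> card N"
proof -
  have finV: "finite V" using g by (simp add: graph_def)
  have SV: "S \<subseteq> V" and TS: "T \<subseteq> S" using st by (auto simp: steiner_tree_def)
  have NV: "N \<subseteq> V" using SV g by (auto simp: N_def cnbhd_def nbrs_def graph_def)
  have finN: "finite N" using NV finV finite_subset by blast
  have SN: "S \<subseteq> N" and nbrsN: "\<And>x. x \<in> S \<Longrightarrow> nbrs E x \<subseteq> N"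
    by (auto simp: N_def cnbhd_def)
  let ?P = "\<lambda>X. X \<subseteq> N \<and> T \<subseteq> X \<and> connected_on E X"
  have "?P S" using SN TS steiner_tree_connected_on[OF st] by blast
  then obtain X where X: "?P X" and Xmin: "\<forall>Z. ?P Z \<longrightarrow> weight S r X \<le> weight S r Z"
    using ex_has_least_nat[of ?P S "weight S r"] by blast
  have finX: "finite X" using X finN finite_subset by blast
  have "(\<Sum>x\<in>X \<inter> S. deg E x) = (\<Sum>w\<in>N. card (nbrs E w \<inter> (X \<inter> S)))"
    unfolding deg_def using finX finN nbrsN by (intro sum_card_nbrs_swap) auto
  also have "\<dots> \<le> (\<Sum>w\<in>N. card (nbrs E w \<inter> X))"
    using finX by (intro sum_mono card_mono) auto
  also have "\<dots> \<le> (\<Sum>w\<in>N. r + 2 * card T)"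
    using X Xmin finN r by (intro sum_mono weight_minimiser_nbrs_le[of N r X T E S]) auto
  finally have "(\<Sum>x\<in>X \<inter> S. deg E x) \<le> card N * (r + 2 * card T)" by simp
  moreover have "(\<Sum>x\<in>X - S. deg E x) \<le> card (X - S) * maxdeg V E"
    using X NV finV by (intro sum_deg_le_maxdeg) auto
  moreover have "DegCost E X = (\<Sum>x\<in>X \<inter> S. deg E x) + (\<Sum>x\<in>X - S. deg E x)"
    unfolding DegCost_def using finX by (rule sum.Int_Diff)
  ultimately have "DegCost E X \<le> card N * (r + 2 * card T) + card (X - S) * maxdeg V E"
    by linarith
  moreover have "r * card (X - S) \<le> card N"
  proof -
    have "r * card (X - S) \<le> weight S r X" by (simp add: weight_def)
    also have "\<dots> \<le> weight S r S" using Xmin \<open>?P S\<close> by blast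
    also have "\<dots> \<le> card N" using SN finN by (simp add: weight_subset card_mono)
    finally show ?thesis .
  qed
  ultimately show ?thesis using that X NV by blast
qed

lemma DegCoststar_upper_bound:
  assumes "st_instance V E T"
  shows "real (DegCoststar V E T) \<le> 4 * (sqrt (maxdeg V E) + card T) * qstar V E T"
proof -
  have g: "graph V E" and TV: "T \<subseteq> V" and "T \<noteq> {}"
    using assms by (auto simp: st_instance_def)
  moreover have "finite T" using g TV by (meson finite_subset graph_def)
  ultimately have k: "card T \<ge> 1" by (simp add: Suc_leI card_gt_0_iff)
  from assms obtain S0 ES0 where "steiner_tree V E T S0 ES0" by (auto simp: st_instance_def)
  then obtain S ES where st: "steiner_tree V E T S ES" and S: "Cost E S = qstar V E T"
    by (rule qstar_attained[OF g])
  define s where "s = sqrt (maxdeg V E)"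
  define r where "r = nat \<lfloor>s\<rfloor> + 1"
  have "s \<ge> 0" by (simp add: s_def)
  then have r: "r \<ge> 1" "s \<le> r" "r \<le> s + 1"
    unfolding r_def by (simp_all add: of_nat_nat floor_le_iff) linarith+
  obtain X where X: "X \<subseteq> V" "T \<subseteq> X" "connected_on E X"
    and deg: "DegCost E X \<le> Cost E S * (r + 2 * card T) + card (X - S) * maxdeg V E"
    and out: "r * card (X - S) \<le> Cost E S"
    using connected_on_small_DegCost[OF g st r(1)] unfolding Cost_def by blast
  obtain EX0 where "steiner_tree V E T X EX0"
    using steiner_tree_of_connected_on[OF g X(1,3,2)] \<open>T \<noteq> {}\<close> by blast
  then have "DegCoststar V E T \<le> DegCost E X" by (rule DegCoststar_le_DegCost[OF g])
  then have "DegCoststar V E T \<le> Cost E S * (r + 2 * card T) + card (X - S) * maxdeg V E"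
    using deg by (rule order.trans)
  from degree_sum_bound_arith[OF this out r(2,3)[unfolded s_def] k] show ?thesis by (simp only: S)
qed

section \<open>Lower-bound instances\<close>

definition complete_edges :: "nat \<Rightarrow> nat set set" where
  "complete_edges n = {{i, j} | i j. i < n \<and> j < n \<and> i \<noteq> j}"

lemma complete_edges_iff: "{u, v} \<in> complete_edges n \<longleftrightarrow> u < n \<and> v < n \<and> u \<noteq> v"
  unfolding complete_edges_def by (auto simp: doubleton_eq_iff)

lemma graph_complete_edges: "graph {0..<n} (complete_edges n)"
  unfolding graph_def complete_edges_def by auto

lemma nbrs_complete_edges: "u < n \<Longrightarrow> nbrs (complete_edges n) u = {0..<n} - {u}"
  unfolding nbrs_def using complete_edges_iff by auto

lemma connected_on_complete_edges: "connected_on (complete_edges n) {0..<n}"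
proof (rule connected_onI[where c = 0])
  fix u assume "u \<in> {0..<n}"
  then show "(u, 0) \<in> (adj_on (complete_edges n) {0..<n})\<^sup>*"
    by (cases "u = 0") (auto simp: adj_on_def complete_edges_iff intro: r_into_rtrancl)
qed

lemma complete_graph_instance:
  assumes n: "n \<ge> 2"
  defines "V \<equiv> {0..<n}" and "E \<equiv> complete_edges n"
  shows "st_instance V E V
    \<and> 1/8 * (sqrt (maxdeg V E) + card V) * qstar V E V \<le> real (DegCoststar V E V)"
proof -
  have g: "graph V E" unfolding V_def E_def by (rule graph_complete_edges)
  have "V \<noteq> {}" using n by (auto simp: V_def)
  then obtain ET where st: "steiner_tree V E V V ET"
    using steiner_tree_of_connected_on[OF g order_refl _ order_refl] connected_on_complete_edges
    unfolding V_def E_def by blast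
  have inst: "st_instance V E V" unfolding st_instance_def using g \<open>V \<noteq> {}\<close> st by blast
  have deg: "deg E u = n - 1" if "u \<in> V" for u
    using that by (simp add: deg_def V_def E_def nbrs_complete_edges)
  then have "deg E ` V = {n - 1}" using \<open>V \<noteq> {}\<close> by auto
  then have maxdeg: "maxdeg V E = n - 1" by (simp add: maxdeg_def)
  have "(\<Union>u\<in>V. cnbhd E u) = V" by (auto simp: cnbhd_def V_def E_def nbrs_complete_edges)
  then have "qstar V E V \<le> n" using qstar_le_Cost[OF g st] by (simp add: Cost_def V_def)
  moreover have "n * (n - 1) \<le> DegCoststar V E V"
  proof (rule DegCoststar_greatest[OF g st])
    fix VT ET' assume "steiner_tree V E V VT ET'"
    then have "VT = V" by (auto simp: steiner_tree_def)
    then show "n * (n - 1) \<le> DegCost E VT" by (simp add: DegCost_def deg V_def)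
  qed
  moreover have "sqrt (n - 1) \<le> real n"
  proof (rule real_le_lsqrt)
    have "real n \<le> real n * real n" using n by (simp add: mult_le_cancel_left1)
    moreover have "real (n - 1) = real n - 1" using n by (simp add: of_nat_diff)
    ultimately show "real (n - 1) \<le> (real n)\<^sup>2" unfolding power2_eq_square by linarith
  qed simp_all
  ultimately have "1/8 * (sqrt (maxdeg V E) + card V) * qstar V E V \<le> 1/8 * (2 * n) * n"
    using maxdeg by (intro mult_mono) (auto simp: V_def)
  also have "\<dots> \<le> n * (n - 1)"
  proof -
    have "2 * real n \<le> real n * real n" using n by (intro mult_right_mono) auto
    moreover have "real (n * (n - 1)) = real n * real n - real n"
      using n by (simp add: of_nat_diff algebra_simps)
    ultimately show ?thesis by simp
  qed
  also have "\<dots> \<le> DegCoststar V E V" using \<open>n * (n - 1) \<le> DegCoststar V E V\<close> by linarith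
  finally show ?thesis using inst by simp
qed

text \<open>Vertices \<open>0..<m\<close> form a path, \<open>m..<2m\<close> are hubs adjacent to every path vertex, and
  \<open>2m..<2m + m\<^sup>2\<close> are leaves adjacent to every hub.\<close>
definition hub_adj :: "nat \<Rightarrow> nat \<Rightarrow> nat \<Rightarrow> bool" where
  "hub_adj m u v \<longleftrightarrow> (v = Suc u \<and> Suc u < m) \<or> (u < m \<and> m \<le> v \<and> v < 2 * m)
     \<or> (m \<le> u \<and> u < 2 * m \<and> 2 * m \<le> v \<and> v < 2 * m + m * m)"

definition hub_edges :: "nat \<Rightarrow> nat set set" where
  "hub_edges m = {{u, v} | u v. hub_adj m u v}"

lemma hub_edges_iff: "{u, v} \<in> hub_edges m \<longleftrightarrow> hub_adj m u v \<or> hub_adj m v u"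
  unfolding hub_edges_def by (auto simp: doubleton_eq_iff insert_commute)

lemma graph_hub_edges: "graph {0..<2 * m + m * m} (hub_edges m)"
  unfolding graph_def hub_edges_def hub_adj_def by auto

lemma nbrs_hub_edges_nonhub:
  "\<not> (m \<le> u \<and> u < 2 * m) \<Longrightarrow> nbrs (hub_edges m) u \<subseteq> {0..<2 * m}"
  by (auto simp: nbrs_def hub_edges_iff hub_adj_def)

lemma nbrs_hub_edges_hub:
  "m \<le> u \<Longrightarrow> u < 2 * m \<Longrightarrow> nbrs (hub_edges m) u \<subseteq> {0..<m} \<union> {2 * m..<2 * m + m * m}"
  by (auto simp: nbrs_def hub_edges_iff hub_adj_def)

lemma deg_hub_edges_le:
  assumes "m \<ge> 1"
  shows "deg (hub_edges m) u \<le> m * m + m"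
proof (cases "m \<le> u \<and> u < 2 * m")
  case True
  then have "deg (hub_edges m) u \<le> card ({0..<m} \<union> {2 * m..<2 * m + m * m})"
    unfolding deg_def by (intro card_mono nbrs_hub_edges_hub) auto
  also have "\<dots> = m + m * m" by (subst card_Un_disjoint) auto
  finally show ?thesis by simp
next
  case False
  then have "deg (hub_edges m) u \<le> card {0..<2 * m}"
    unfolding deg_def by (intro card_mono nbrs_hub_edges_nonhub) auto
  then have "deg (hub_edges m) u \<le> 2 * m" by simp
  then show ?thesis using le_square[of m] by linarith
qed

lemma deg_hub_edges_hub:
  assumes "m \<le> h" "h < 2 * m"
  shows "m * m \<le> deg (hub_edges m) h"
proof -
  have "{2 * m..<2 * m + m * m} \<subseteq> nbrs (hub_edges m) h"
    using assms by (auto simp: nbrs_def hub_edges_iff hub_adj_def)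
  moreover have "finite (nbrs (hub_edges m) h)"
    using nbrs_hub_edges_hub[OF assms] by (rule finite_subset) simp
  ultimately have "card {2 * m..<2 * m + m * m} \<le> deg (hub_edges m) h"
    unfolding deg_def by (rule card_mono[rotated])
  then show ?thesis by simp
qed

lemma deg_hub_edges_path:
  assumes "a < m"
  shows "m \<le> deg (hub_edges m) a"
proof -
  have "{m..<2 * m} \<subseteq> nbrs (hub_edges m) a"
    using assms by (auto simp: nbrs_def hub_edges_iff hub_adj_def)
  moreover have "nbrs (hub_edges m) a \<subseteq> {0..<2 * m}"
    using assms by (intro nbrs_hub_edges_nonhub) simp
  then have "finite (nbrs (hub_edges m) a)" by (rule finite_subset) simp
  ultimately have "card {m..<2 * m} \<le> deg (hub_edges m) a"
    unfolding deg_def by (rule card_mono[rotated])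
  then show ?thesis by simp
qed

lemma connected_on_hub_edges_path: "connected_on (hub_edges m) {0..<m}"
proof (rule connected_onI[where c = 0])
  fix i assume "i \<in> {0..<m}"
  then show "(i, 0) \<in> (adj_on (hub_edges m) {0..<m})\<^sup>*"
  proof (induction i)
    case (Suc i)
    then have "(Suc i, i) \<in> adj_on (hub_edges m) {0..<m}"
      by (auto simp: adj_on_def hub_edges_iff hub_adj_def)
    with Suc show ?case by (auto intro: converse_rtrancl_into_rtrancl)
  qed simp
qed

text \<open>Without hubs, the only edges out of \<open>{0..<j}\<close> lead to \<open>j\<close>, so a tree through \<open>0\<close> and \<open>m - 1\<close>
  must contain every path vertex.\<close>
lemma hub_free_steiner_tree_contains_path:
  assumes st: "steiner_tree V (hub_edges m) {0, m - 1} VT ET"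
    and no_hub: "\<forall>h\<in>VT. \<not> (m \<le> h \<and> h < 2 * m)"
  shows "{0..<m} \<subseteq> VT"
proof
  fix j assume "j \<in> {0..<m}"
  then have j: "j < m" by simp
  show "j \<in> VT"
  proof (rule ccontr)
    assume j_out: "j \<notin> VT"
    have tree: "is_tree VT ET" and ET: "ET \<subseteq> hub_edges m" and ends: "0 \<in> VT" "m - 1 \<in> VT"
      using st by (auto simp: steiner_tree_def)
    then have path: "(0, m - 1) \<in> {(x, y). {x, y} \<in> ET}\<^sup>*" by (simp add: is_tree_def)
    have "0 < j" using ends(1) j_out by (cases j) auto
    have "y < j" if "(0, y) \<in> {(x, y). {x, y} \<in> ET}\<^sup>*" for y
      using that
    proof (induction rule: rtrancl_induct)
      case (step x y)
      then have xy: "{x, y} \<in> ET" by simp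
      then have "y \<in> VT" using tree by (auto simp: is_tree_def)
      then have "y \<noteq> j" "\<not> (m \<le> y \<and> y < 2 * m)" using j_out no_hub by auto
      moreover have "hub_adj m x y \<or> hub_adj m y x" using xy ET hub_edges_iff by blast
      ultimately show ?case using step.IH j unfolding hub_adj_def by auto
    qed (use \<open>0 < j\<close> in simp)
    from this[OF path] j show False by simp
  qed
qed

lemma DegCost_hub_edges_ge:
  assumes st: "steiner_tree V (hub_edges m) {0, m - 1} VT ET"
  shows "m * m \<le> DegCost (hub_edges m) VT"
proof -
  have fin: "finite VT" using st by (simp add: steiner_tree_def is_tree_def)
  show ?thesis
  proof (cases "\<exists>h\<in>VT. m \<le> h \<and> h < 2 * m")
    case True
    then obtain h where h: "h \<in> VT" "m \<le> h" "h < 2 * m" by blast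
    then have "m * m \<le> deg (hub_edges m) h" by (intro deg_hub_edges_hub)
    also have "\<dots> \<le> DegCost (hub_edges m) VT"
      unfolding DegCost_def using fin h(1) by (intro member_le_sum) auto
    finally show ?thesis .
  next
    case False
    then have path: "{0..<m} \<subseteq> VT" using hub_free_steiner_tree_contains_path[OF st] by blast
    have "m * m = (\<Sum>a\<in>{0..<m}. m)" by simp
    also have "\<dots> \<le> (\<Sum>a\<in>{0..<m}. deg (hub_edges m) a)"
      by (intro sum_mono deg_hub_edges_path) simp
    also have "\<dots> \<le> DegCost (hub_edges m) VT"
      unfolding DegCost_def using fin path by (intro sum_mono2) auto
    finally show ?thesis .
  qed
qed

lemma hub_instance:
  assumes m: "m \<ge> 2"
  defines "V \<equiv> {0..<2 * m + m * m}" and "E \<equiv> hub_edges m" and "T \<equiv> {0, m - 1}"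
  shows "st_instance V E T \<and> card T = 2 \<and> m * m \<le> maxdeg V E
    \<and> 1/8 * (sqrt (maxdeg V E) + card T) * qstar V E T \<le> real (DegCoststar V E T)"
proof -
  let ?P = "{0..<m}"
  have g: "graph V E" unfolding V_def E_def by (rule graph_hub_edges)
  have finV: "finite V" by (simp add: V_def)
  have T: "T \<subseteq> ?P" "T \<noteq> {}" "card T = 2" using m by (auto simp: T_def)
  have PV: "?P \<subseteq> V" by (auto simp: V_def)
  have "connected_on E ?P" unfolding E_def by (rule connected_on_hub_edges_path)
  then obtain ET where st: "steiner_tree V E T ?P ET"
    using steiner_tree_of_connected_on[OF g PV _ T(1,2)] by blast
  have "T \<subseteq> V" using T(1) PV by (rule order.trans)
  then have inst: "st_instance V E T" unfolding st_instance_def using g T(2) st by blast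
  have "m \<in> V" using m by (simp add: V_def)
  then have "deg E m \<le> maxdeg V E" by (rule deg_le_maxdeg[OF finV])
  then have maxdeg_ge: "m * m \<le> maxdeg V E"
    using deg_hub_edges_hub[of m m] m unfolding E_def by linarith
  have "\<forall>v\<in>V. deg E v \<le> m * m + m" using m deg_hub_edges_le unfolding E_def by simp
  then have "maxdeg V E \<le> m * m + m"
    unfolding maxdeg_def using finV \<open>m \<in> V\<close> by (subst Max_le_iff) auto
  then have "real (maxdeg V E) \<le> (real m + 1)\<^sup>2"
    using of_nat_le_iff[of "maxdeg V E" "(m + 1)\<^sup>2", where 'a = real]
    by (simp add: power2_eq_square algebra_simps)
  then have sqrt_maxdeg: "sqrt (maxdeg V E) \<le> real m + 1" by (rule real_le_lsqrt[rotated]) simp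
  have "cnbhd E u \<subseteq> {0..<2 * m}" if "u \<in> ?P" for u
    using that nbrs_hub_edges_nonhub[of m u] m by (auto simp: cnbhd_def E_def)
  then have "(\<Union>u\<in>?P. cnbhd E u) \<subseteq> {0..<2 * m}" by (rule UN_least)
  then have "Cost E ?P \<le> card {0..<2 * m}" unfolding Cost_def by (rule card_mono[rotated]) simp
  then have q: "qstar V E T \<le> 2 * m" using qstar_le_Cost[OF g st] by simp
  have "m * m \<le> DegCoststar V E T"
  proof (rule DegCoststar_greatest[OF g st])
    fix VT ET' assume "steiner_tree V E T VT ET'"
    then show "m * m \<le> DegCost E VT" unfolding E_def T_def by (rule DegCost_hub_edges_ge)
  qed
  have "1/8 * (sqrt (maxdeg V E) + card T) * qstar V E T \<le> 1/8 * (real m + 3) * (2 * m)"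
    using sqrt_maxdeg q T(3) by (intro mult_mono) auto
  also have "\<dots> \<le> m * m"
  proof -
    have "(real m + 3) * real m \<le> (4 * real m) * real m" using m by (intro mult_right_mono) auto
    then show ?thesis by (simp add: algebra_simps)
  qed
  also have "\<dots> \<le> DegCoststar V E T" using \<open>m * m \<le> DegCoststar V E T\<close> by linarith
  finally show ?thesis using inst T(3) maxdeg_ge by simp
qed

theorem lemma1:
  shows "(\<exists>C::real. \<forall>(V::nat set) E T. st_instance V E T \<longrightarrow>
            real (DegCoststar V E T)
              \<le> C * (sqrt (real (maxdeg V E)) + real (card T)) * real (qstar V E T))
       \<and> (\<exists>c::real. c > 0 \<and>
            (\<exists>k0::nat. \<forall>D::nat. \<exists>(V::nat set) E T. st_instance V E T \<and> card T \<le> k0 \<and> maxdeg V E \<ge> D \<and>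
               real (DegCoststar V E T)
                 \<ge> c * (sqrt (real (maxdeg V E)) + real (card T)) * real (qstar V E T))
          \<and> (\<forall>K::nat. \<exists>(V::nat set) E T. st_instance V E T \<and> card T \<ge> K \<and>
               real (DegCoststar V E T)
                 \<ge> c * (sqrt (real (maxdeg V E)) + real (card T)) * real (qstar V E T)))"
proof (intro conjI)
  show "\<exists>C::real. \<forall>(V::nat set) E T. st_instance V E T \<longrightarrow>
      real (DegCoststar V E T) \<le> C * (sqrt (real (maxdeg V E)) + real (card T)) * real (qstar V E T)"
    using DegCoststar_upper_bound by blast
  have hub: "\<exists>(V::nat set) E T. st_instance V E T \<and> card T \<le> 2 \<and> maxdeg V E \<ge> D \<and>
      real (DegCoststar V E T) \<ge> 1/8 * (sqrt (maxdeg V E) + card T) * qstar V E T" for D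
  proof -
    obtain V :: "nat set" and E T
      where "st_instance V E T" "card T = 2" "(D + 2) * (D + 2) \<le> maxdeg V E"
      "1/8 * (sqrt (maxdeg V E) + card T) * qstar V E T \<le> real (DegCoststar V E T)"
      using hub_instance[OF le_add2[of 2 D]] by blast
    moreover have "D \<le> (D + 2) * (D + 2)" by simp
    ultimately show ?thesis by (intro exI[of _ V] exI[of _ E] exI[of _ T]) auto
  qed
  have complete: "\<exists>(V::nat set) E T. st_instance V E T \<and> card T \<ge> K \<and>
      real (DegCoststar V E T) \<ge> 1/8 * (sqrt (maxdeg V E) + card T) * qstar V E T" for K
    using complete_graph_instance[OF le_add2[of 2 K]]
    by (intro exI[of _ "{0..<K + 2}"] exI[of _ "complete_edges (K + 2)"]) auto
  show "\<exists>c::real. c > 0 \<and>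
      (\<exists>k0::nat. \<forall>D::nat. \<exists>(V::nat set) E T. st_instance V E T \<and> card T \<le> k0 \<and> maxdeg V E \<ge> D \<and>
         real (DegCoststar V E T) \<ge> c * (sqrt (real (maxdeg V E)) + real (card T)) * real (qstar V E T))
      \<and> (\<forall>K::nat. \<exists>(V::nat set) E T. st_instance V E T \<and> card T \<ge> K \<and>
         real (DegCoststar V E T) \<ge> c * (sqrt (real (maxdeg V E)) + real (card T)) * real (qstar V E T))"
    using hub complete by (intro exI[of _ "1/8::real"] conjI exI[of _ "2::nat"] allI) simp_all
qed

end
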